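(* For any prime number $p$ and any integer $n\ge 1$, $$r(p,n)=\frac{p^{2n-1}+p^{n+1}-p^{n-1}+p^2-p-1}{p^2-1}.$$
   Context: For a prime $p$ and $n\ge 1$, $r(p,n)$ denotes the number of orbits of the left action of $\mathrm{SL}(2,\mathbb{Z})$ on $(\mathbb{Z}_p\times\mathbb{Z}_p)^n$, where elements of $(\mathbb{Z}_p\times\mathbb{Z}_p)^n$ are viewed as $2\times n$ matrices over $\mathbb{Z}_p$ and a matrix in $\mathrm{SL}(2,\mathbb{Z})$ acts by left matrix multiplication with entries reduced modulo $p$. *)

theory Defs
  imports "HOL-Analysis.Analysis"
begin

definition SL2Z :: "(int^2^2) set" where
  "SL2Z = {A. det A = 1}"

text \<open>Elements of (Z_p x Z_p)^n, viewed as 2 x n matrices over Z_p: the i-th column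
  (i < n) is a vector in int^2 with entries in {0..<p}; columns i >= n are zero.\<close>
definition configs :: "nat \<Rightarrow> nat \<Rightarrow> (nat \<Rightarrow> int^2) set" where
  "configs p n = {v. (\<forall>i<n. \<forall>k. 0 \<le> v i $ k \<and> v i $ k < int p) \<and> (\<forall>i\<ge>n. v i = 0)}"

definition act :: "nat \<Rightarrow> int^2^2 \<Rightarrow> (nat \<Rightarrow> int^2) \<Rightarrow> (nat \<Rightarrow> int^2)" where
  "act p A v = (\<lambda>i. \<chi> k. (A *v v i) $ k mod int p)"

definition orbit :: "nat \<Rightarrow> (nat \<Rightarrow> int^2) \<Rightarrow> (nat \<Rightarrow> int^2) set" where
  "orbit p v = {act p A v | A. A \<in> SL2Z}"

definition r :: "nat \<Rightarrow> nat \<Rightarrow> nat" where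
  "r p n = card {orbit p v | v. v \<in> configs p n}"

end

theory Submission
  imports Defs
begin

text \<open>Every orbit contains exactly one matrix in normal form: either zero, or its first nonzero
  column (index \<open>j\<close>) is \<open>e\<^sub>1 = (1, 0)\<close>, the following columns are of the form \<open>(x, 0)\<close> up to an
  index \<open>k\<close> where (if the columns span \<open>\<int>\<^sub>p\<^sup>2\<close>) the column is \<open>(0, b)\<close> with \<open>b \<noteq> 0\<close>, and the columns
  after \<open>k\<close> are arbitrary. Existence: \<open>SL(2,\<int>)\<close> moves every vector that is nonzero mod \<open>p\<close>
  to \<open>e\<^sub>1\<close> mod \<open>p\<close>, and a shear \<open>[[1, t], [0, 1]]\<close>, which fixes \<open>e\<^sub>1\<close>, clears the first entry of
  column \<open>k\<close>. Uniqueness: a matrix fixing \<open>e\<^sub>1\<close> mod \<open>p\<close> acts as a shear, and a shear that keeps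
  the column \<open>(0, b)\<close> in normal form is trivial. There are \<open>p ^ (n - 1 - j)\<close> normal forms of rank one
  with pivot \<open>j\<close> and \<open>p ^ (k - 1 - j) * (p - 1) * p ^ (2 * (n - 1 - k))\<close> of rank two with pivots
  \<open>j < k\<close>; summing these geometric series gives the formula.\<close>

definition vec2 :: "'a \<Rightarrow> 'a \<Rightarrow> 'a^2" where
  "vec2 x y = (\<chi> i. if i = 1 then x else y)"

definition mat2 :: "'a \<Rightarrow> 'a \<Rightarrow> 'a \<Rightarrow> 'a \<Rightarrow> 'a^2^2" where
  "mat2 a b c d = (\<chi> i. if i = 1 then vec2 a b else vec2 c d)"

lemma vec2_nth [simp]: "vec2 x y $ 1 = x" "vec2 x y $ 2 = y"
  by (simp_all add: vec2_def)

lemma mat2_nth [simp]: "mat2 a b c d $ 1 = vec2 a b" "mat2 a b c d $ 2 = vec2 c d"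
  by (simp_all add: mat2_def)

lemma vec2_eta: "vec2 (x $ 1) (x $ 2) = x"
  by (simp add: vec_eq_iff forall_2)

lemma mat2_eta: "mat2 (A$1$1) (A$1$2) (A$2$1) (A$2$2) = A"
  by (simp add: vec_eq_iff forall_2)

lemma vec2_eq_iff: "vec2 a b = vec2 c d \<longleftrightarrow> a = c \<and> b = d"
  by (auto simp: vec_eq_iff forall_2)

lemma zero_vec2: "0 = vec2 0 0"
  by (simp add: vec_eq_iff forall_2)

lemma vec2_eq_0_iff [simp]: "vec2 a b = 0 \<longleftrightarrow> a = 0 \<and> b = 0"
  by (simp add: zero_vec2 vec2_eq_iff)

lemma det_mat2 [simp]: "det (mat2 a b c d) = a * d - b * (c :: 'a :: comm_ring_1)"
  by (simp add: det_2)

lemma mat2_mult_vec2 [simp]: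
  "mat2 a b c d *v vec2 x y = vec2 (a * x + b * y) (c * x + d * (y :: 'a :: semiring_1))"
  by (simp add: vec_eq_iff forall_2 matrix_vector_mult_def sum_2)

lemma mat2_mult_mat2 [simp]:
  "mat2 a b c d ** mat2 a' b' c' d' =
     mat2 (a * a' + b * c') (a * b' + b * d') (c * a' + d * c') (c * b' + d * (d' :: 'a :: semiring_1))"
  by (simp add: vec_eq_iff forall_2 matrix_matrix_mult_def sum_2)

lemma mat_one_mat2: "mat 1 = mat2 1 0 0 1"
  by (simp add: vec_eq_iff forall_2 mat_def)

section \<open>\<open>SL(2,\<int>)\<close> acting on vectors modulo \<open>p\<close>\<close>

lemma SL2Z_mult: "A \<in> SL2Z \<Longrightarrow> B \<in> SL2Z \<Longrightarrow> A ** B \<in> SL2Z"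
  by (simp add: SL2Z_def det_mul)

lemma SL2Z_one: "mat 1 \<in> SL2Z"
  by (simp add: SL2Z_def det_I)

lemma SL2Z_left_inverse:
  assumes "A \<in> SL2Z"
  obtains B where "B \<in> SL2Z" "B ** A = mat 1"
proof -
  obtain a b c d where A: "A = mat2 a b c d"
    using mat2_eta by metis
  with assms have "a * d - b * c = 1"
    by (simp add: SL2Z_def)
  then show thesis
    by (intro that[of "mat2 d (-b) (-c) a"]) (auto simp: A SL2Z_def mat_one_mat2 algebra_simps)
qed

text \<open>The vector is first sheared to \<open>(a, b (1 - u a)) = (a, b w m)\<close> and then mapped by
  \<open>[[u, -w], [m, a]]\<close>, a lift of determinant \<open>u a + w m = 1\<close> of \<open>diag(u, a)\<close> modulo \<open>m\<close>.\<close>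

lemma SL2Z_to_e1_mod:
  fixes a b m :: int
  assumes "coprime a m" "m > 1"
  obtains A where "A \<in> SL2Z" "(A *v vec2 a b) $ 1 mod m = 1" "(A *v vec2 a b) $ 2 mod m = 0"
proof -
  obtain u w where uw: "u * a + w * m = 1"
    using bezout_int[of a m] assms(1) by (auto simp: coprime_iff_gcd_eq_1)
  define M where "M = mat2 u (-w) m a ** mat2 1 0 (- b * u) 1"
  have "M \<in> SL2Z"
    using uw by (simp add: M_def SL2Z_def det_mul algebra_simps)
  moreover have "M *v vec2 a b = vec2 (1 + m * (- w - b * w * w)) (m * (a + a * b * w))"
    using uw by (simp add: M_def matrix_vector_mul_assoc[symmetric] vec2_eq_iff) algebra
  ultimately show thesis
    using assms(2) by (intro that[of M]) (simp_all add: mod_mult_self2)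
qed

lemma SL2Z_to_e1:
  assumes "prime p" "\<not> (int p dvd a \<and> int p dvd b)"
  obtains A where "A \<in> SL2Z" "(A *v vec2 a b) $ 1 mod int p = 1" "(A *v vec2 a b) $ 2 mod int p = 0"
proof -
  have p: "int p > 1" "prime (int p)"
    using assms(1) prime_gt_1_nat by auto
  show thesis
  proof (cases "int p dvd a")
    case False
    then have "coprime a (int p)"
      using prime_imp_coprime[OF p(2)] by (simp add: coprime_commute)
    then show thesis
      using SL2Z_to_e1_mod p(1) that by blast
  next
    case True
    with assms(2) have "coprime b (int p)"
      using prime_imp_coprime[OF p(2)] by (simp add: coprime_commute)
    then obtain A where A: "A \<in> SL2Z" "(A *v vec2 b (-a)) $ 1 mod int p = 1" "(A *v vec2 b (-a)) $ 2 mod int p = 0"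
      using SL2Z_to_e1_mod p(1) by blast
    have "(A ** mat2 0 1 (-1) 0) *v vec2 a b = A *v vec2 b (-a)"
      by (simp add: matrix_vector_mul_assoc[symmetric])
    moreover have "A ** mat2 0 1 (-1) 0 \<in> SL2Z"
      using A(1) by (simp add: SL2Z_def det_mul)
    ultimately show thesis
      using A(2,3) that by metis
  qed
qed

lemma residue_dvd_imp_zero: "0 \<le> x \<Longrightarrow> x < m \<Longrightarrow> m dvd x \<Longrightarrow> x = (0 :: int)"
  using zdvd_not_zless[of x m] by (cases "x = 0") auto

lemma configs_column_range:
  assumes "v \<in> configs p n" "p > 0"
  shows "0 \<le> v i $ k" "v i $ k < int p"
proof -
  have "i < n \<or> v i = 0"
    using assms(1) by (cases "i < n") (simp_all add: configs_def)
  with assms show "0 \<le> v i $ k" "v i $ k < int p"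
    by (auto simp: configs_def)
qed

lemma configs_nonzero_below: "v \<in> configs p n \<Longrightarrow> v i \<noteq> 0 \<Longrightarrow> i < n"
  by (auto simp: configs_def not_less[symmetric])

lemma act_column: "act p A v i = vec2 ((A *v v i) $ 1 mod int p) ((A *v v i) $ 2 mod int p)"
  by (simp add: act_def vec_eq_iff forall_2)

lemma act_vec2:
  "v i = vec2 x y \<Longrightarrow> act p (mat2 a b c d) v i = vec2 ((a * x + b * y) mod int p) ((c * x + d * y) mod int p)"
  by (simp add: act_column)

lemma act_zero_column: "v i = 0 \<Longrightarrow> act p A v i = 0"
  by (simp add: act_column zero_vec2[symmetric])

lemma mult_mod_vec:
  fixes A :: "int^2^2"
  shows "(A *v (\<chi> k. y $ k mod m)) $ k mod m = (A *v y) $ k mod m"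
proof -
  obtain a b c d where A: "A = mat2 a b c d"
    using mat2_eta by metis
  obtain x z where y: "y = vec2 x z"
    using vec2_eta by metis
  have "(\<chi> k. y $ k mod m) = vec2 (x mod m) (z mod m)"
    by (simp add: y vec_eq_iff forall_2)
  moreover have "(r * (x mod m) + s * (z mod m)) mod m = (r * x + s * z) mod m" for r s
    by (metis mod_add_eq mod_mult_right_eq)
  ultimately show ?thesis
    using exhaust_2[of k] by (auto simp: A y)
qed

lemma act_act: "act p A (act p B v) = act p (A ** B) v"
  by (simp add: act_def vec_eq_iff mult_mod_vec matrix_vector_mul_assoc)

lemma act_one:
  assumes "v \<in> configs p n"
  shows "act p (mat 1) v = v"
proof
  fix i
  have "\<forall>k. 0 \<le> v i $ k \<and> v i $ k < int p \<or> v i = 0"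
    using assms by (cases "i < n") (auto simp: configs_def)
  then show "act p (mat 1) v i = v i"
    by (auto simp: act_def vec_eq_iff)
qed

lemma act_in_configs:
  assumes "p > 0" "v \<in> configs p n"
  shows "act p A v \<in> configs p n"
  using assms act_zero_column[of v _ p A] by (auto simp: configs_def act_def)

lemma act_inverse:
  assumes "A \<in> SL2Z"
  obtains B where "B \<in> SL2Z" "\<And>v. v \<in> configs p n \<Longrightarrow> act p B (act p A v) = v"
  using SL2Z_left_inverse[OF assms] by (metis act_act act_one)

lemma act_eq_zero_iff:
  assumes "A \<in> SL2Z" "v \<in> configs p n"
  shows "act p A v i = 0 \<longleftrightarrow> v i = 0"
  using act_zero_column act_inverse[OF assms(1)] assms(2) by metis

lemma orbit_act:
  assumes "A \<in> SL2Z" "v \<in> configs p n"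
  shows "orbit p (act p A v) = orbit p v"
proof -
  obtain B where B: "B \<in> SL2Z" "act p B (act p A v) = v"
    using act_inverse[OF assms(1)] assms(2) by metis
  have "orbit p (act p A v) \<subseteq> orbit p v" if "A \<in> SL2Z" for A v
    using that by (auto simp: orbit_def act_act intro: SL2Z_mult)
  then show ?thesis
    using assms(1) B by (metis subset_antisym)
qed

lemma act_shear:
  "act p (mat2 1 t 0 1) v i = vec2 ((v i $ 1 + t * v i $ 2) mod int p) (v i $ 2 mod int p)"
  using act_vec2[of v i "v i $ 1" "v i $ 2" p 1 t 0 1] by (simp add: vec2_eta)

lemma act_shear_fixes:
  assumes "v \<in> configs p n" "v i $ 2 = 0"
  shows "act p (mat2 1 t 0 1) v i = v i"
proof (cases "i < n")
  case True
  with assms show ?thesis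
    by (simp add: act_shear configs_def vec_eq_iff forall_2)
next
  case False
  with assms show ?thesis
    by (simp add: act_zero_column configs_def)
qed

lemma act_shear_multiple:
  assumes "v \<in> configs p n" "int p dvd t"
  shows "act p (mat2 1 t 0 1) v = v"
proof
  fix i
  obtain s where "t = int p * s"
    using assms(2) by blast
  then show "act p (mat2 1 t 0 1) v i = v i"
    using configs_column_range[OF assms(1)] assms(2)
    by (cases "p = 0") (simp_all add: act_shear mult.assoc vec2_eta)
qed

lemma act_fixing_e1:
  assumes "a mod int p = 1 mod int p" "c mod int p = 0" "a * d - b * c = 1"
  shows "act p (mat2 a b c d) v = act p (mat2 1 b 0 1) v"
proof
  fix i
  obtain x y where v: "v i = vec2 x y"
    using vec2_eta by metis
  have a: "int p dvd a - 1" and c: "int p dvd c"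
    using assms(1,2) by (simp_all add: mod_eq_dvd_iff mod_eq_0_iff_dvd)
  have "d - 1 = b * c - (a - 1) * d"
    using assms(3) by (simp add: algebra_simps)
  then have d: "int p dvd d - 1"
    using a c by (simp add: dvd_diff)
  have "(a * x + b * y) - (x + b * y) = (a - 1) * x" "(c * x + d * y) - y = c * x + (d - 1) * y"
    by (simp_all add: algebra_simps)
  then have "int p dvd (a * x + b * y) - (x + b * y)" "int p dvd (c * x + d * y) - y"
    using a c d by (simp_all only:) simp_all
  then show "act p (mat2 a b c d) v i = act p (mat2 1 b 0 1) v i"
    by (simp add: act_vec2[of v i x y, OF v] vec2_eq_iff mod_eq_dvd_iff)
qed

lemma leading_column_to_e1:
  assumes "prime p" "v \<in> configs p n" "v i \<noteq> 0"
  obtains A where "A \<in> SL2Z" "act p A v (LEAST i. v i \<noteq> 0) = vec2 1 0"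
proof -
  let ?j = "LEAST i. v i \<noteq> 0"
  have "v ?j \<noteq> 0"
    using assms(3) by (rule LeastI)
  moreover have "0 \<le> v ?j $ k" "v ?j $ k < int p" for k
    using configs_column_range[OF assms(2)] prime_gt_0_nat[OF assms(1)] by auto
  ultimately have "\<not> (int p dvd v ?j $ 1 \<and> int p dvd v ?j $ 2)"
    using residue_dvd_imp_zero by (metis vec2_eta vec2_eq_0_iff)
  then obtain A where "A \<in> SL2Z"
    "(A *v vec2 (v ?j $ 1) (v ?j $ 2)) $ 1 mod int p = 1" "(A *v vec2 (v ?j $ 1) (v ?j $ 2)) $ 2 mod int p = 0"
    by (rule SL2Z_to_e1[OF assms(1)])
  then show thesis
    by (intro that[of A]) (simp_all add: act_column vec2_eta)
qed

lemma shear_clearing_column: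
  assumes "prime p" "w \<in> configs p n" "w k $ 2 \<noteq> 0"
  obtains t where "act p (mat2 1 t 0 1) w k = vec2 0 (w k $ 2)"
proof -
  let ?a = "w k $ 1" and ?b = "w k $ 2"
  have range: "0 \<le> w k $ i" "w k $ i < int p" for i
    using configs_column_range[OF assms(2)] prime_gt_0_nat[OF assms(1)] by auto
  then have "\<not> int p dvd ?b"
    using assms(3) residue_dvd_imp_zero by blast
  then have "coprime (int p) ?b"
    using prime_imp_coprime[of "int p"] assms(1) by simp
  then obtain u s where us: "u * ?b + s * int p = 1"
    using bezout_int[of ?b "int p"] by (auto simp: coprime_iff_gcd_eq_1 gcd.commute)
  have "?a + (- ?a * u) * ?b = int p * (?a * s)"
    using us by algebra
  then have "(?a + (- ?a * u) * ?b) mod int p = 0"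
    by simp
  moreover have "?b mod int p = ?b"
    using range by simp
  ultimately have "act p (mat2 1 (- ?a * u) 0 1) w k = vec2 0 ?b"
    unfolding act_shear by (simp only:)
  then show thesis
    by (rule that)
qed

section \<open>Normal forms\<close>

definition first_axis_residues :: "nat \<Rightarrow> (int^2) set" where
  "first_axis_residues p = {x. 0 \<le> x $ 1 \<and> x $ 1 < int p \<and> x $ 2 = 0}"

definition second_axis_units :: "nat \<Rightarrow> (int^2) set" where
  "second_axis_units p = {x. x $ 1 = 0 \<and> 0 < x $ 2 \<and> x $ 2 < int p}"

definition residue_vectors :: "nat \<Rightarrow> (int^2) set" where
  "residue_vectors p = {x. \<forall>k. 0 \<le> x $ k \<and> x $ k < int p}"

definition rank1_forms :: "nat \<Rightarrow> nat \<Rightarrow> nat \<Rightarrow> (nat \<Rightarrow> int^2) set" where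
  "rank1_forms p n j = Pi UNIV (\<lambda>i.
     if i < j then {0} else if i = j then {vec2 1 0}
     else if i < n then first_axis_residues p else {0})"

definition rank2_forms :: "nat \<Rightarrow> nat \<Rightarrow> nat \<Rightarrow> nat \<Rightarrow> (nat \<Rightarrow> int^2) set" where
  "rank2_forms p n j k = Pi UNIV (\<lambda>i.
     if i < j then {0} else if i = j then {vec2 1 0}
     else if i < k then first_axis_residues p else if i = k then second_axis_units p
     else if i < n then residue_vectors p else {0})"

definition normal_forms :: "nat \<Rightarrow> nat \<Rightarrow> (nat \<Rightarrow> int^2) set" where
  "normal_forms p n = insert (\<lambda>i. 0)
     (\<Union>j<n. rank1_forms p n j \<union> (\<Union>k\<in>{j<..<n}. rank2_forms p n j k))"

lemma rank1_forms_leading: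
  assumes "v \<in> rank1_forms p n j"
  shows "(LEAST i. v i \<noteq> 0) = j" "v j = vec2 1 0" "v i $ 2 = 0"
proof -
  have v: "v i \<in> (if i < j then {0} else if i = j then {vec2 1 0}
     else if i < n then first_axis_residues p else {0})" for i
    by (rule Pi_mem[OF assms[unfolded rank1_forms_def] UNIV_I])
  show "v j = vec2 1 0"
    using v[of j] by simp
  moreover have "v i = 0" if "i < j" for i
    using v[of i] that by simp
  ultimately show "(LEAST i. v i \<noteq> 0) = j"
    by (intro Least_equality) (auto simp: not_le[symmetric])
  show "v i $ 2 = 0"
    using v[of i] by (auto simp: first_axis_residues_def split: if_splits)
qed

lemma rank2_forms_leading:
  assumes "v \<in> rank2_forms p n j k" "j < k"
  shows "(LEAST i. v i \<noteq> 0) = j" "v j = vec2 1 0"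
    and "(LEAST i. v i $ 2 \<noteq> 0) = k" "v k \<in> second_axis_units p"
proof -
  have v: "v i \<in> (if i < j then {0} else if i = j then {vec2 1 0}
     else if i < k then first_axis_residues p else if i = k then second_axis_units p
     else if i < n then residue_vectors p else {0})" for i
    by (rule Pi_mem[OF assms(1)[unfolded rank2_forms_def] UNIV_I])
  show "v j = vec2 1 0"
    using v[of j] by simp
  moreover have "v i = 0" if "i < j" for i
    using v[of i] that by simp
  ultimately show "(LEAST i. v i \<noteq> 0) = j"
    by (intro Least_equality) (auto simp: not_le[symmetric])
  show "v k \<in> second_axis_units p"
    using v[of k] assms(2) by simp
  moreover have "v i $ 2 = 0" if "i < k" for i
    using v[of i] that by (auto simp: first_axis_residues_def split: if_splits)
  ultimately show "(LEAST i. v i $ 2 \<noteq> 0) = k"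
    by (intro Least_equality) (auto simp: second_axis_units_def not_le[symmetric])
qed

lemma Pi_subset_configs:
  assumes "\<And>i. i < n \<Longrightarrow> B i \<subseteq> residue_vectors p" "\<And>i. i \<ge> n \<Longrightarrow> B i = {0}"
  shows "Pi UNIV B \<subseteq> configs p n"
  using assms by (fastforce simp: configs_def residue_vectors_def Pi_iff)

lemma normal_forms_subset_configs:
  assumes "p > 1"
  shows "normal_forms p n \<subseteq> configs p n"
proof -
  have "{0, vec2 1 0} \<union> first_axis_residues p \<union> second_axis_units p \<subseteq> residue_vectors p"
    using assms
    by (auto simp: first_axis_residues_def second_axis_units_def residue_vectors_def forall_2)
  with assms show ?thesis
    unfolding normal_forms_def rank1_forms_def rank2_forms_def
    by (intro insert_subsetI UN_least Un_least Pi_subset_configs) (auto simp: configs_def)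
qed

lemma normal_forms_leading:
  assumes "c \<in> normal_forms p n" "c \<noteq> (\<lambda>i. 0)"
  shows "c (LEAST i. c i \<noteq> 0) = vec2 1 0"
  using assms rank1_forms_leading rank2_forms_leading unfolding normal_forms_def by fastforce

lemma normal_forms_second_leading:
  assumes "c \<in> normal_forms p n" "c i $ 2 \<noteq> 0"
  shows "c (LEAST i. c i $ 2 \<noteq> 0) \<in> second_axis_units p"
proof -
  have "c \<notin> rank1_forms p n j" for j
    using assms(2) rank1_forms_leading(3) by blast
  with assms show ?thesis
    using rank2_forms_leading unfolding normal_forms_def by fastforce
qed

lemma in_rank1_forms:
  assumes "w \<in> configs p n" "\<forall>i<j. w i = 0" "w j = vec2 1 0" "\<forall>i. w i $ 2 = 0"
  shows "w \<in> rank1_forms p n j"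
  using assms by (auto simp: rank1_forms_def first_axis_residues_def configs_def not_less)

lemma in_rank2_forms:
  assumes "w \<in> configs p n" "\<forall>i<j. w i = 0" "w j = vec2 1 0"
    and "\<forall>i<k. w i $ 2 = 0" "w k \<in> second_axis_units p" "j < k"
  shows "w \<in> rank2_forms p n j k"
  using assms
  by (auto simp: rank2_forms_def first_axis_residues_def second_axis_units_def residue_vectors_def configs_def not_less)

lemma exists_rank_normal_form:
  assumes "prime p" "w \<in> configs p n" "\<forall>i<j. w i = 0" "w j = vec2 1 0"
  obtains T where "T \<in> SL2Z" "act p T w \<in> rank1_forms p n j \<union> (\<Union>k\<in>{j<..<n}. rank2_forms p n j k)"
proof (cases "\<forall>i. w i $ 2 = 0")
  case True
  then show thesis
    using that[OF SL2Z_one] in_rank1_forms[OF assms(2-4)] act_one[OF assms(2)] by simp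
next
  case False
  then obtain i where "w i $ 2 \<noteq> 0"
    by blast
  define k where "k = (LEAST i. w i $ 2 \<noteq> 0)"
  have wk: "w k $ 2 \<noteq> 0"
    unfolding k_def by (rule LeastI) fact
  have before_k: "\<forall>i<k. w i $ 2 = 0"
    unfolding k_def using not_less_Least by blast
  have "j < k"
    using assms(3,4) wk by (metis linorder_neqE_nat vec2_nth(2) zero_index)
  moreover have "k < n"
    using configs_nonzero_below[OF assms(2)] wk by force
  moreover obtain t where t: "act p (mat2 1 t 0 1) w k = vec2 0 (w k $ 2)"
    using shear_clearing_column[OF assms(1,2) wk] .
  let ?u = "act p (mat2 1 t 0 1) w"
  have "?u i = w i" if "i < k" for i
    using act_shear_fixes[OF assms(2)] before_k that by blast
  moreover have "?u k \<in> second_axis_units p"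
    using t wk configs_column_range[OF assms(2) prime_gt_0_nat[OF assms(1)], of k 2]
    by (simp add: second_axis_units_def)
  moreover have "?u \<in> configs p n"
    using act_in_configs[OF prime_gt_0_nat[OF assms(1)] assms(2)] .
  ultimately have "?u \<in> rank2_forms p n j k"
    using assms(3,4) before_k by (intro in_rank2_forms) auto
  with \<open>j < k\<close> \<open>k < n\<close> have "?u \<in> rank1_forms p n j \<union> (\<Union>k\<in>{j<..<n}. rank2_forms p n j k)"
    by auto
  then show thesis
    by (rule that[rotated]) (simp add: SL2Z_def)
qed

lemma exists_normal_form:
  assumes "prime p" "v \<in> configs p n"
  obtains A where "A \<in> SL2Z" "act p A v \<in> normal_forms p n"
proof (cases "v = (\<lambda>i. 0)")
  case True
  then show thesis
    using that[OF SL2Z_one] act_one[OF assms(2)] by (simp add: normal_forms_def)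
next
  case False
  then obtain i where "v i \<noteq> 0"
    by blast
  let ?j = "LEAST i. v i \<noteq> 0"
  obtain A where A: "A \<in> SL2Z" "act p A v ?j = vec2 1 0"
    using leading_column_to_e1[OF assms \<open>v i \<noteq> 0\<close>] .
  have w: "act p A v \<in> configs p n"
    using act_in_configs[OF prime_gt_0_nat[OF assms(1)] assms(2)] .
  have "\<forall>i<?j. act p A v i = 0"
    using not_less_Least act_zero_column by blast
  then obtain T where "T \<in> SL2Z"
    "act p T (act p A v) \<in> rank1_forms p n ?j \<union> (\<Union>k\<in>{?j<..<n}. rank2_forms p n ?j k)"
    using exists_rank_normal_form[OF assms(1) w _ A(2)] by blast
  moreover have "?j < n"
    using configs_nonzero_below[OF w] A(2) by simp
  ultimately show thesis
    using that[of "T ** A"] A(1) by (auto simp: normal_forms_def act_act SL2Z_mult)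
qed

lemma normal_forms_shear_unique:
  assumes "prime p" "c \<in> normal_forms p n" "c' \<in> normal_forms p n" "c' = act p (mat2 1 t 0 1) c"
  shows "c' = c"
proof (cases "\<forall>i. c i $ 2 = 0")
  case True
  have "c \<in> configs p n"
    using normal_forms_subset_configs prime_gt_1_nat[OF assms(1)] assms(2) by blast
  with True show ?thesis
    unfolding assms(4) by (intro ext act_shear_fixes) auto
next
  case False
  then obtain i where "c i $ 2 \<noteq> 0"
    by blast
  have p: "p > 1" "prime (int p)"
    using assms(1) prime_gt_1_nat by auto
  have c: "c \<in> configs p n"
    using normal_forms_subset_configs[OF p(1)] assms(2) by blast
  have shear: "c' i = vec2 ((c i $ 1 + t * c i $ 2) mod int p) (c i $ 2)" for i
    using configs_column_range[OF c, of i 2] p(1) by (simp add: assms(4) act_shear)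
  txt \<open>The shear sends the pivot column \<open>(0, b)\<close> of \<open>c\<close> to \<open>(t b mod p, b)\<close>, which is the pivot
    column of \<open>c'\<close> and hence has first entry zero.\<close>
  let ?k = "LEAST i. c i $ 2 \<noteq> 0"
  have "(LEAST i. c' i $ 2 \<noteq> 0) = ?k"
    using shear by simp
  then have "c' ?k $ 1 = 0" "c ?k \<in> second_axis_units p"
    using normal_forms_second_leading[OF assms(2) \<open>c i $ 2 \<noteq> 0\<close>] shear[of i] \<open>c i $ 2 \<noteq> 0\<close>
      normal_forms_second_leading[OF assms(3), of i]
    by (auto simp: second_axis_units_def)
  then have "int p dvd t * c ?k $ 2"
    using shear[of ?k] by (simp add: second_axis_units_def mod_eq_0_iff_dvd)
  moreover have "\<not> int p dvd c ?k $ 2"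
    using \<open>c ?k \<in> second_axis_units p\<close> residue_dvd_imp_zero[of "c ?k $ 2" "int p"]
    by (auto simp: second_axis_units_def)
  ultimately have "int p dvd t"
    using p(2) prime_dvd_mult_iff by blast
  then show ?thesis
    unfolding assms(4) by (rule act_shear_multiple[OF c])
qed

lemma normal_forms_unique:
  assumes "prime p" "c \<in> normal_forms p n" "c' \<in> normal_forms p n"
    and "A \<in> SL2Z" "c' = act p A c"
  shows "c' = c"
proof (cases "c = (\<lambda>i. 0)")
  case True
  show ?thesis
    unfolding assms(5) True by (rule ext) (rule act_zero_column, simp)
next
  case False
  have "c \<in> configs p n"
    using normal_forms_subset_configs[OF prime_gt_1_nat[OF assms(1)]] assms(2) by blast
  then have zeros: "c' i = 0 \<longleftrightarrow> c i = 0" for i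
    unfolding assms(5) using act_eq_zero_iff[OF assms(4)] by blast
  let ?j = "LEAST i. c i \<noteq> 0"
  from False obtain i where "c i \<noteq> 0"
    by blast
  then have "c' i \<noteq> 0"
    using zeros by blast
  then have "c' \<noteq> (\<lambda>i. 0)"
    by (rule contrapos_nn) simp
  moreover have "(LEAST i. c' i \<noteq> 0) = ?j"
    by (simp add: zeros)
  ultimately have "c' ?j = vec2 1 0"
    using normal_forms_leading[OF assms(3)] by simp
  moreover have "c ?j = vec2 1 0"
    using normal_forms_leading[OF assms(2) False] .
  moreover obtain a b d e where A: "A = mat2 a b d e"
    using mat2_eta by metis
  ultimately have "vec2 (a mod int p) (d mod int p) = vec2 1 0"
    using act_vec2[of c ?j 1 0 p a b d e] unfolding assms(5) A by simp
  then have "a mod int p = 1 mod int p" "d mod int p = 0"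
    using prime_gt_1_nat[OF assms(1)] by (simp_all add: vec2_eq_iff)
  moreover have "a * e - b * d = 1"
    using assms(4) by (simp add: A SL2Z_def)
  ultimately have "c' = act p (mat2 1 b 0 1) c"
    unfolding assms(5) A by (rule act_fixing_e1)
  then show ?thesis
    by (rule normal_forms_shear_unique[OF assms(1-3)])
qed

lemma r_eq_card_normal_forms:
  assumes "prime p"
  shows "r p n = card (normal_forms p n)"
proof -
  have sub: "normal_forms p n \<subseteq> configs p n"
    using normal_forms_subset_configs prime_gt_1_nat[OF assms] .
  have "{orbit p v | v. v \<in> configs p n} = orbit p ` normal_forms p n"
  proof (intro equalityI subsetI)
    fix X
    assume "X \<in> {orbit p v | v. v \<in> configs p n}"
    then obtain v where v: "v \<in> configs p n" "X = orbit p v"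
      by blast
    obtain A where A: "A \<in> SL2Z" "act p A v \<in> normal_forms p n"
      using exists_normal_form[OF assms v(1)] .
    have "X = orbit p (act p A v)"
      using orbit_act[OF A(1) v(1)] v(2) by simp
    then show "X \<in> orbit p ` normal_forms p n"
      using A(2) by (rule image_eqI)
  qed (use sub in blast)
  moreover have "inj_on (orbit p) (normal_forms p n)"
  proof (rule inj_onI)
    fix c c'
    assume c: "c \<in> normal_forms p n" "c' \<in> normal_forms p n" and "orbit p c = orbit p c'"
    have "c' = act p (mat 1) c'"
      using act_one sub c(2) by auto
    then have "c' \<in> orbit p c"
      using SL2Z_one \<open>orbit p c = orbit p c'\<close> unfolding orbit_def by blast
    then obtain A where "A \<in> SL2Z" "c' = act p A c"
      by (auto simp: orbit_def)
    then have "c' = c"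
      by (rule normal_forms_unique[OF assms c])
    then show "c = c'"
      by simp
  qed
  ultimately show ?thesis
    by (simp add: r_def card_image)
qed

section \<open>Counting normal forms\<close>

lemma bij_betw_restrict_Pi_eventually_const:
  fixes n :: nat
  assumes "\<And>i. i \<ge> n \<Longrightarrow> B i = {z}"
  shows "bij_betw (\<lambda>f. restrict f {..<n}) (Pi UNIV B) (Pi\<^sub>E {..<n} B)"
proof (rule bij_betw_byWitness[where f' = "\<lambda>g i. if i < n then g i else z"])
  have "f i = z" if "f \<in> Pi UNIV B" "i \<ge> n" for f i
    using Pi_mem[OF that(1) UNIV_I, of i] assms[OF that(2)] by simp
  then show "\<forall>f\<in>Pi UNIV B. (\<lambda>i. if i < n then restrict f {..<n} i else z) = f"
    by (auto simp: not_less)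
  show "\<forall>g\<in>Pi\<^sub>E {..<n} B. restrict (\<lambda>i. if i < n then g i else z) {..<n} = g"
  proof (intro ballI ext)
    fix g i
    assume "g \<in> Pi\<^sub>E {..<n} B"
    then show "restrict (\<lambda>i. if i < n then g i else z) {..<n} i = g i"
      by (cases "i < n") (simp_all add: PiE_def extensional_def)
  qed
  show "(\<lambda>f. restrict f {..<n}) ` Pi UNIV B \<subseteq> Pi\<^sub>E {..<n} B"
    by (auto split: if_splits)
  show "(\<lambda>g i. if i < n then g i else z) ` Pi\<^sub>E {..<n} B \<subseteq> Pi UNIV B"
    using assms by (auto simp: PiE_iff not_less)
qed

lemma card_Pi_eventually_const:
  fixes n :: nat
  assumes "\<And>i. i \<ge> n \<Longrightarrow> B i = {z}"
  shows "card (Pi UNIV B) = (\<Prod>i<n. card (B i))"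
  using bij_betw_same_card[OF bij_betw_restrict_Pi_eventually_const[of n B z, OF assms]]
    card_PiE[of "{..<n}" B] by simp

lemma finite_Pi_eventually_const:
  fixes n :: nat
  assumes "\<And>i. i \<ge> n \<Longrightarrow> B i = {z}" "\<And>i. i < n \<Longrightarrow> finite (B i)"
  shows "finite (Pi UNIV B)"
  using bij_betw_finite[OF bij_betw_restrict_Pi_eventually_const[of n B z, OF assms(1)]]
    finite_PiE[of "{..<n}" B] assms(2) by simp

lemma first_axis_residues_eq: "first_axis_residues p = (\<lambda>x. vec2 x 0) ` {0..<int p}"
proof (rule set_eqI)
  fix x :: "int^2"
  show "x \<in> first_axis_residues p \<longleftrightarrow> x \<in> (\<lambda>x. vec2 x 0) ` {0..<int p}"
    using vec2_eta[of x] by (force simp: first_axis_residues_def)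
qed

lemma second_axis_units_eq: "second_axis_units p = (\<lambda>y. vec2 0 y) ` {1..<int p}"
proof (rule set_eqI)
  fix x :: "int^2"
  show "x \<in> second_axis_units p \<longleftrightarrow> x \<in> (\<lambda>y. vec2 0 y) ` {1..<int p}"
    using vec2_eta[of x] by (auto simp: second_axis_units_def intro!: image_eqI[of _ _ "x $ 2"])
qed

lemma residue_vectors_eq: "residue_vectors p = (\<lambda>(x, y). vec2 x y) ` ({0..<int p} \<times> {0..<int p})"
proof (rule set_eqI)
  fix x :: "int^2"
  show "x \<in> residue_vectors p \<longleftrightarrow> x \<in> (\<lambda>(x, y). vec2 x y) ` ({0..<int p} \<times> {0..<int p})"
    using vec2_eta[of x] by (force simp: residue_vectors_def forall_2)
qed

lemma card_first_axis_residues: "card (first_axis_residues p) = p"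
  by (simp add: first_axis_residues_eq card_image inj_on_def vec2_eq_iff)

lemma card_second_axis_units: "card (second_axis_units p) = p - 1"
  by (simp add: second_axis_units_eq card_image inj_on_def vec2_eq_iff nat_diff_distrib)

lemma card_residue_vectors: "card (residue_vectors p) = p ^ 2"
  by (simp add: residue_vectors_eq card_image inj_on_def vec2_eq_iff card_cartesian_product power2_eq_square)

lemma finite_column_sets:
  "finite (first_axis_residues p)" "finite (second_axis_units p)" "finite (residue_vectors p)"
  by (simp_all add: first_axis_residues_eq second_axis_units_eq residue_vectors_eq)

lemma card_rank1_forms:
  assumes "j < n"
  shows "card (rank1_forms p n j) = p ^ (n - Suc j)"
proof -
  let ?B = "\<lambda>i. if i < j then {0} else if i = j then {vec2 1 0}
     else if i < n then first_axis_residues p else {0 :: int^2}"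
  let ?c = "\<lambda>i. card (?B i)"
  have "prod ?c {0..<n} = prod ?c {0..<Suc j} * prod ?c {Suc j..<n}"
    by (rule prod.atLeastLessThan_concat[symmetric]) (use assms in auto)
  also have "prod ?c {0..<Suc j} = 1"
    by (rule prod.neutral) simp
  also have "prod ?c {Suc j..<n} = (\<Prod>i\<in>{Suc j..<n}. p)"
    by (rule prod.cong) (simp_all add: card_first_axis_residues)
  finally have "prod ?c {..<n} = p ^ (n - Suc j)"
    by (simp add: atLeast0LessThan)
  moreover have "card (rank1_forms p n j) = prod ?c {..<n}"
    using assms unfolding rank1_forms_def by (intro card_Pi_eventually_const) auto
  ultimately show ?thesis
    by simp
qed

lemma card_rank2_forms:
  assumes "j < k" "k < n"
  shows "card (rank2_forms p n j k) = p ^ (k - Suc j) * (p - 1) * (p ^ 2) ^ (n - Suc k)"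
proof -
  let ?B = "\<lambda>i. if i < j then {0} else if i = j then {vec2 1 0}
     else if i < k then first_axis_residues p else if i = k then second_axis_units p
     else if i < n then residue_vectors p else {0 :: int^2}"
  let ?c = "\<lambda>i. card (?B i)"
  have "prod ?c {0..<n} = prod ?c {0..<Suc k} * prod ?c {Suc k..<n}"
    by (rule prod.atLeastLessThan_concat[symmetric]) (use assms in auto)
  also have "prod ?c {0..<Suc k} = prod ?c {0..<k} * prod ?c {k..<Suc k}"
    by (rule prod.atLeastLessThan_concat[symmetric]) auto
  also have "prod ?c {0..<k} = prod ?c {0..<Suc j} * prod ?c {Suc j..<k}"
    by (rule prod.atLeastLessThan_concat[symmetric]) (use assms in auto)
  also have "prod ?c {0..<Suc j} = 1"
    by (rule prod.neutral) simp
  also have "prod ?c {Suc j..<k} = (\<Prod>i\<in>{Suc j..<k}. p)"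
    by (rule prod.cong) (simp_all add: card_first_axis_residues)
  also have "prod ?c {k..<Suc k} = p - 1"
    using assms by (simp add: card_second_axis_units)
  also have "prod ?c {Suc k..<n} = (\<Prod>i\<in>{Suc k..<n}. p ^ 2)"
    using assms by (intro prod.cong) (simp_all add: card_residue_vectors)
  finally have "prod ?c {..<n} = p ^ (k - Suc j) * (p - 1) * (p ^ 2) ^ (n - Suc k)"
    by (simp add: atLeast0LessThan ac_simps)
  moreover have "card (rank2_forms p n j k) = prod ?c {..<n}"
    using assms unfolding rank2_forms_def by (intro card_Pi_eventually_const) auto
  ultimately show ?thesis
    by simp
qed

lemma finite_rank1_forms: "j < n \<Longrightarrow> finite (rank1_forms p n j)"
  unfolding rank1_forms_def by (rule finite_Pi_eventually_const[of n _ 0]) (auto simp: finite_column_sets)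

lemma finite_rank2_forms: "j < k \<Longrightarrow> k < n \<Longrightarrow> finite (rank2_forms p n j k)"
  unfolding rank2_forms_def by (rule finite_Pi_eventually_const[of n _ 0]) (auto simp: finite_column_sets)

lemma card_normal_forms:
  "card (normal_forms p n) = 1 + (\<Sum>j<n. p ^ (n - Suc j) +
     (\<Sum>k\<in>{j<..<n}. p ^ (k - Suc j) * (p - 1) * (p ^ 2) ^ (n - Suc k)))"
proof -
  define R2 where "R2 j = (\<Union>k\<in>{j<..<n}. rank2_forms p n j k)" for j
  have finite: "finite (rank1_forms p n j)" "finite (R2 j)" if "j < n" for j
    using that finite_rank1_forms finite_rank2_forms by (auto simp: R2_def)
  have leading: "(LEAST i. v i \<noteq> 0) = j" "v j = vec2 1 0"
    if "v \<in> rank1_forms p n j \<union> R2 j" for v j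
    using that rank1_forms_leading rank2_forms_leading by (auto simp: R2_def)
  have card_R2: "card (R2 j) = (\<Sum>k\<in>{j<..<n}. p ^ (k - Suc j) * (p - 1) * (p ^ 2) ^ (n - Suc k))" for j
    unfolding R2_def
  proof (subst card_UN_disjoint)
    show "\<forall>k\<in>{j<..<n}. \<forall>k'\<in>{j<..<n}. k \<noteq> k' \<longrightarrow> rank2_forms p n j k \<inter> rank2_forms p n j k' = {}"
      using rank2_forms_leading(3) by (metis disjoint_iff greaterThanLessThan_iff)
  qed (simp_all add: finite_rank2_forms card_rank2_forms)
  have "card (\<Union>j<n. rank1_forms p n j \<union> R2 j) = (\<Sum>j<n. card (rank1_forms p n j \<union> R2 j))"
  proof (rule card_UN_disjoint)
    show "\<forall>j\<in>{..<n}. \<forall>j'\<in>{..<n}. j \<noteq> j' \<longrightarrow> (rank1_forms p n j \<union> R2 j) \<inter> (rank1_forms p n j' \<union> R2 j') = {}"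
      using leading(1) by blast
  qed (use finite in auto)
  also have "\<dots> = (\<Sum>j<n. card (rank1_forms p n j) + card (R2 j))"
  proof (rule sum.cong)
    fix j
    assume "j \<in> {..<n}"
    moreover have "rank1_forms p n j \<inter> R2 j = {}"
      using rank1_forms_leading(3) rank2_forms_leading(4)
      by (fastforce simp: R2_def second_axis_units_def)
    ultimately show "card (rank1_forms p n j \<union> R2 j) = card (rank1_forms p n j) + card (R2 j)"
      using finite by (simp add: card_Un_disjoint)
  qed simp
  moreover have "(\<lambda>i. 0) \<notin> (\<Union>j<n. rank1_forms p n j \<union> R2 j)"
    using leading(2) by fastforce
  ultimately show ?thesis
    using finite by (simp add: normal_forms_def R2_def[symmetric] card_rank1_forms card_R2)
qed

lemma sum_triangle_reindex:
  fixes f :: "nat \<Rightarrow> 'a :: comm_monoid_add" and g :: "nat \<Rightarrow> nat \<Rightarrow> 'a"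
  shows "(\<Sum>j<n. f (n - Suc j) + (\<Sum>k\<in>{j<..<n}. g (k - Suc j) (n - Suc k)))
    = (\<Sum>m<n. f m + (\<Sum>l<m. g l (m - Suc l)))"
proof -
  have "(\<Sum>k\<in>{j<..<n}. g (k - Suc j) (n - Suc k)) = (\<Sum>l<n - Suc j. g l (n - Suc j - Suc l))" for j
    by (simp add: atLeastSucLessThan_greaterThanLessThan[symmetric] sum.atLeastLessThan_shift_0
        atLeast0LessThan)
  then show ?thesis
    using sum.nat_diff_reindex[where g = "\<lambda>m. f m + (\<Sum>l<m. g l (m - Suc l))" and n = n] by simp
qed

lemma pivot_sum_closed_form:
  fixes q :: "'a :: comm_ring_1"
  shows "q * (\<Sum>l<m. q ^ l * (q - 1) * (q ^ 2) ^ (m - Suc l)) = q ^ (2 * m) - q ^ m"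
proof (induction m)
  case 0
  then show ?case
    by simp
next
  case (Suc m)
  have "(\<Sum>l<m. q ^ l * (q - 1) * (q ^ 2) ^ (Suc m - Suc l))
      = q ^ 2 * (\<Sum>l<m. q ^ l * (q - 1) * (q ^ 2) ^ (m - Suc l))"
    unfolding sum_distrib_left
  proof (rule sum.cong)
    fix l
    assume "l \<in> {..<m}"
    then have "Suc m - Suc l = Suc (m - Suc l)"
      by simp
    then show "q ^ l * (q - 1) * (q ^ 2) ^ (Suc m - Suc l) = q ^ 2 * (q ^ l * (q - 1) * (q ^ 2) ^ (m - Suc l))"
      by (simp only: power_Suc ac_simps)
  qed simp
  then have "q * (\<Sum>l<Suc m. q ^ l * (q - 1) * (q ^ 2) ^ (Suc m - Suc l))
      = q ^ 2 * (q * (\<Sum>l<m. q ^ l * (q - 1) * (q ^ 2) ^ (m - Suc l))) + q ^ Suc m * (q - 1)"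
    by (simp add: algebra_simps)
  then show ?case
    unfolding Suc.IH by (simp add: algebra_simps power_add power_mult power2_eq_square)
qed

lemma normal_form_count_closed_form:
  fixes q :: "'a :: comm_ring_1"
  shows "q * (q ^ 2 - 1) * (1 + (\<Sum>m<n. q ^ m + (\<Sum>l<m. q ^ l * (q - 1) * (q ^ 2) ^ (m - Suc l))))
    = q ^ (2 * n) + q ^ (n + 2) - q ^ n + q ^ 3 - q ^ 2 - q"
proof (induction n)
  case 0
  then show ?case
    by (simp add: algebra_simps power2_eq_square power3_eq_cube)
next
  case (Suc n)
  define P where "P = (\<Sum>l<n. q ^ l * (q - 1) * (q ^ 2) ^ (n - Suc l))"
  define S where "S = (\<Sum>m<n. q ^ m + (\<Sum>l<m. q ^ l * (q - 1) * (q ^ 2) ^ (m - Suc l)))"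
  have P: "q * P = q ^ (2 * n) - q ^ n"
    unfolding P_def by (rule pivot_sum_closed_form)
  have S: "q * (q ^ 2 - 1) * (1 + S) = q ^ (2 * n) + q ^ (n + 2) - q ^ n + q ^ 3 - q ^ 2 - q"
    unfolding S_def by (rule Suc.IH)
  have "q * (q ^ 2 - 1) * (1 + (S + (q ^ n + P)))
      = q * (q ^ 2 - 1) * (1 + S) + (q ^ 2 - 1) * (q * q ^ n + q * P)"
    by (simp add: algebra_simps)
  also have "\<dots> = q ^ (2 * n) + q ^ (n + 2) - q ^ n + q ^ 3 - q ^ 2 - q
      + (q ^ 2 - 1) * (q * q ^ n + q ^ (2 * n) - q ^ n)"
    unfolding S P by (simp add: algebra_simps)
  also have "\<dots> = q ^ (2 * Suc n) + q ^ (Suc n + 2) - q ^ Suc n + q ^ 3 - q ^ 2 - q"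
    by (simp add: algebra_simps power_add power_mult power2_eq_square)
  finally show ?case
    by (simp add: S_def P_def)
qed

theorem theorem4p3:
  fixes p n :: nat
  assumes "prime p" and "n \<ge> 1"
  shows "real (r p n) =
    (real p ^ (2*n - 1) + real p ^ (n + 1) - real p ^ (n - 1) + real p ^ 2 - real p - 1)
      / (real p ^ 2 - 1)"
proof -
  let ?q = "real p"
  let ?T = "\<Sum>m<n. ?q ^ m + (\<Sum>l<m. ?q ^ l * (?q - 1) * (?q ^ 2) ^ (m - Suc l))"
  have q: "?q \<ge> 2"
    using prime_ge_2_nat[OF assms(1)] by simp
  have "r p n = 1 + (\<Sum>m<n. p ^ m + (\<Sum>l<m. p ^ l * (p - 1) * (p ^ 2) ^ (m - Suc l)))"
    using sum_triangle_reindex[where f = "\<lambda>m. p ^ m" and g = "\<lambda>l m. p ^ l * (p - 1) * (p ^ 2) ^ m"]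
    by (simp add: r_eq_card_normal_forms[OF assms(1)] card_normal_forms)
  then have "real (r p n) = 1 + ?T"
    using q by (simp add: of_nat_diff)
  then have "?q * ((?q ^ 2 - 1) * real (r p n)) = ?q ^ (2 * n) + ?q ^ (n + 2) - ?q ^ n + ?q ^ 3 - ?q ^ 2 - ?q"
    using normal_form_count_closed_form[of ?q n] by (simp only: mult.assoc)
  also have "\<dots> = ?q * (?q ^ (2*n - 1) + ?q ^ (n + 1) - ?q ^ (n - 1) + ?q ^ 2 - ?q - 1)"
    using assms(2) by (cases n) (simp_all add: algebra_simps power2_eq_square power3_eq_cube)
  finally have "(?q ^ 2 - 1) * real (r p n) = ?q ^ (2*n - 1) + ?q ^ (n + 1) - ?q ^ (n - 1) + ?q ^ 2 - ?q - 1"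
    using q by simp
  moreover have "?q ^ 2 - 1 \<noteq> 0"
    using power_mono[OF q, of 2] by simp
  ultimately show ?thesis
    by (simp add: field_simps)
qed

end
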